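(* Assume that $q$ is $\mathcal{C}$-decomposable for a partition $\mathcal{C}=\{C_1,\ldots,C_r\}$ of $C$, with associated function $\tilde c$. Let $\phi\colon\{0,1\}^n\to\{0,1\}$ be a semicoherent structure with a modular decomposition $$\phi(\mathbf{x})=\psi(\chi_1(\mathbf{x}^{C_1}),\ldots,\chi_r(\mathbf{x}^{C_r})),$$ where $\chi_j\colon\{0,1\}^{C_j}\to\{0,1\}$ and $\psi\colon\{0,1\}^r\to\{0,1\}$ are semicoherent. Then, for every $0\le k\le n$, $$\overline{P}_{n-k}=\sum_{\mathbf{a}\in\mathcal{T}_k}\tilde c(\mathbf{a})\,\widehat{\psi}\big(\overline{P}_{1,n_1-a_1},\ldots,\overline{P}_{r,n_r-a_r}\big).$$
   Context: Consider components $C=[n]$ with random lifetimes $T_1,\ldots,T_n$ whose joint distribution has no ties. Subsets $A$ are identified with Boolean vectors via $x_i=1$ iff $i\in A$, and functions on $\{0,1\}^n$ are viewed as set functions. A structure $\phi\colon\{0,1\}^m\to\{0,1\}$ is semicoherent if it is nondecreasing in each variable, $\phi(0,\ldots,0)=0$ and $\phi(1,\ldots,1)=1$. The relative quality function is $q(A)=\Pr(\max_{i\notin A}T_i<\min_{i\in A}T_i)$, with $q(\varnothing)=q([n])=1$. The tail probability signature of $(C,\phi)$ is $$\overline{P}_k=\sum_{A\subseteq C,\,|A|=n-k}q(A)\,\phi(A),\qquad 0\le k\le n.$$ For $k\ge1$ this equals $\Pr(T_S>T_{k:n})$, where $T_S$ is the system lifetime and $T_{k:n}$ is the $k$-th order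 statistic. For a partition $\mathcal{C}=\{C_1,\ldots,C_r\}$ of $C$ into nonempty blocks, write $n_j=|C_j|$, $A_j=A\cap C_j$, $\mathbf{x}^{C_j}=(x_i)_{i\in C_j}$, and $q^{C_j}(A)=\Pr(\max_{i\in C_j\setminus A}T_i<\min_{i\in A}T_i)$ for $A\subseteq C_j$. The tail probability signature of module $(C_j,\chi_j)$ is $$\overline{P}_{j,k}=\sum_{A\subseteq C_j,\,|A|=n_j-k}q^{C_j}(A)\,\chi_j(A),\qquad 0\le k\le n_j.$$ The function $q$ is $\mathcal{C}$-decomposable if there is $\tilde c\colon\prod_{j=1}^r\{0,\ldots,n_j\}\to\mathbb{R}$ with $q(A)=\tilde c(|A_1|,\ldots,|A_r|)\prod_{j=1}^r q^{C_j}(A_j)$ for all $A\subseteq C$. For $0\le k\le n$ let $\mathcal{T}_k=\{\mathbf{a}\in\mathbb{N}^r:0\le a_j\le n_j,\ \sum_j a_j=k\}$. The multilinear extension of $\psi\colon\{0,1\}^r\to\mathbb{R}$ is $$\widehat\psi(z_1,\ldots,z_r)=\sum_{B\subseteq[r]}\psi(B)\prod_{j\in B}z_j\prod_{j\in[r]\setminus B}(1-z_j)\quad\text{on }[0,1]^r.$$ *)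

theory Defs
  imports "HOL-Probability.Probability"
begin

text \<open>Components are indexed by natural numbers; subsets A are identified with
Boolean vectors. Boolean-valued structures are set functions with values in bool.\<close>

definition semicoherent :: "'a set \<Rightarrow> ('a set \<Rightarrow> bool) \<Rightarrow> bool" where
  "semicoherent S f \<longleftrightarrow>
     (\<forall>A B. A \<subseteq> B \<and> B \<subseteq> S \<and> f A \<longrightarrow> f B) \<and> \<not> f {} \<and> f S"

text \<open>The universally quantified form gives
 the event the whole space when A or S-A is empty, i.e. q({}) = q(S) = 1.\<close>
definition qrel :: "'m measure \<Rightarrow> (nat \<Rightarrow> 'm \<Rightarrow> real) \<Rightarrow> nat set \<Rightarrow> nat set \<Rightarrow> real" where
  "qrel M T S A = measure M {\<omega> \<in> space M. \<forall>i \<in> S - A. \<forall>j \<in> A. T i \<omega> < T j \<omega>}"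

definition tps :: "'m measure \<Rightarrow> (nat \<Rightarrow> 'm \<Rightarrow> real) \<Rightarrow> nat set \<Rightarrow> (nat set \<Rightarrow> bool) \<Rightarrow> nat \<Rightarrow> real" where
  "tps M T S f k = (\<Sum>A \<in> {A. A \<subseteq> S \<and> card A = card S - k}. qrel M T S A * of_bool (f A))"

definition mlext :: "nat \<Rightarrow> (nat set \<Rightarrow> bool) \<Rightarrow> (nat \<Rightarrow> real) \<Rightarrow> real" where
  "mlext r psi z = (\<Sum>B \<in> Pow {1..r}. of_bool (psi B) * (\<Prod>j\<in>B. z j) * (\<Prod>j\<in>{1..r} - B. 1 - z j))"

definition Tset :: "nat \<Rightarrow> (nat \<Rightarrow> nat set) \<Rightarrow> nat \<Rightarrow> (nat \<Rightarrow> nat) set" where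
  "Tset r Cb k = {a. (\<forall>j\<in>{1..r}. a j \<le> card (Cb j)) \<and> (\<forall>j. j \<notin> {1..r} \<longrightarrow> a j = 0)
                      \<and> (\<Sum>j=1..r. a j) = k}"

end

theory Submission
  imports Defs
begin

(* Group the k-element sets A of components by their block profile a = (|A_1|, ..., |A_r|).
   The sets with profile a are exactly the unions of families (A_1, ..., A_r) with A_j a subset
   of C_j of size a_j, and by decomposability and modularity
   q(A) phi(A) = c(a) * prod_j q^{C_j}(A_j) * psi({j. chi_j(A_j)}).
   For each block the weights q^{C_j}(A_j), |A_j| = a_j, sum to 1, since a.s. exactly one A_j
   consists of the a_j longest-living components of C_j. Summing over the families therefore
   computes the expectation of psi at independent Bernoulli variables with means
   P_{j, n_j - a_j}, which is the multilinear extension of psi evaluated at these means. *)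

lemma qrel_event_measurable:
  fixes T :: "nat \<Rightarrow> 'm \<Rightarrow> real"
  assumes "finite S" "\<And>i. i \<in> S \<Longrightarrow> T i \<in> borel_measurable M" "A \<subseteq> S"
  shows "{\<omega> \<in> space M. \<forall>i \<in> S - A. \<forall>j \<in> A. T i \<omega> < T j \<omega>} \<in> sets M"
proof -
  have [measurable]: "T i \<in> borel_measurable M" if "i \<in> S" for i using assms(2) that .
  have "finite (S - A)" "finite A" using assms finite_subset by auto
  then show ?thesis by measurable (use assms(3) in auto)
qed

lemma ex_subset_card_above_complement:
  fixes t :: "'a \<Rightarrow> 'b::linorder"
  assumes "finite S" "inj_on t S" "m \<le> card S"
  shows "\<exists>A. A \<subseteq> S \<and> card A = m \<and> (\<forall>i \<in> S - A. \<forall>j \<in> A. t i < t j)"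
  using assms(3)
proof (induction m)
  case 0
  show ?case by auto
next
  case (Suc m)
  then obtain A where A: "A \<subseteq> S" "card A = m" "\<forall>i \<in> S - A. \<forall>j \<in> A. t i < t j"
    by auto
  have "card A < card S" using A(2) Suc.prems by simp
  then have "S - A \<noteq> {}" using A(1) by (metis Diff_eq_empty_iff less_irrefl subset_antisym)
  then have "Max (t ` (S - A)) \<in> t ` (S - A)" using assms(1) by (intro Max_in) auto
  then obtain x where x: "x \<in> S - A" "t x = Max (t ` (S - A))" by (metis imageE)
  have "t i < t x" if "i \<in> S - insert x A" for i
  proof -
    have "t i \<le> t x" using that x assms(1) by auto
    moreover have "t i \<noteq> t x" using that x assms(2) by (metis Diff_iff insertCI inj_onD)
    ultimately show ?thesis by simp
  qed
  moreover have "card (insert x A) = Suc m"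
    using A(1,2) x(1) assms(1) by (simp add: finite_subset)
  ultimately show ?case using A x(1) by (intro exI[of _ "insert x A"]) auto
qed

lemma sum_qrel_subsets_card:
  assumes "prob_space M" "finite S" "m \<le> card S"
    and meas: "\<And>i. i \<in> S \<Longrightarrow> T i \<in> borel_measurable M"
    and noties: "AE \<omega> in M. \<forall>i\<in>S. \<forall>j\<in>S. i \<noteq> j \<longrightarrow> T i \<omega> \<noteq> T j \<omega>"
  shows "(\<Sum>A \<in> {A. A \<subseteq> S \<and> card A = m}. qrel M T S A) = 1"
proof -
  interpret prob_space M by fact
  define E where "E A = {\<omega> \<in> space M. \<forall>i \<in> S - A. \<forall>j \<in> A. T i \<omega> < T j \<omega>}" for A
  let ?F = "{A. A \<subseteq> S \<and> card A = m}"
  have fin: "finite ?F" using assms(2) by auto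
  have events: "E ` ?F \<subseteq> events"
    unfolding E_def by (auto intro!: qrel_event_measurable[OF assms(2)] meas)
  have not_subset: "\<not> A \<subseteq> B" if "A \<in> ?F" "B \<in> ?F" "A \<noteq> B" for A B
  proof
    assume "A \<subseteq> B"
    moreover have "finite B" using that(2) assms(2) finite_subset by blast
    ultimately have "A = B" using that(1,2) by (intro card_subset_eq) auto
    with that(3) show False by simp
  qed
  have disj: "disjoint_family_on E ?F"
    unfolding disjoint_family_on_def
  proof (intro ballI impI)
    fix A B assume A: "A \<in> ?F" and B: "B \<in> ?F" and "A \<noteq> B"
    obtain i where i: "i \<in> A" "i \<notin> B" using not_subset[OF A B \<open>A \<noteq> B\<close>] by blast
    obtain j where j: "j \<in> B" "j \<notin> A" using not_subset[OF B A] \<open>A \<noteq> B\<close> by blast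
    have "T j \<omega> < T i \<omega>" "T i \<omega> < T j \<omega>" if "\<omega> \<in> E A" "\<omega> \<in> E B" for \<omega>
      using that i j A B unfolding E_def by auto
    then show "E A \<inter> E B = {}" by fastforce
  qed
  have "AE \<omega> in M. \<omega> \<in> (\<Union>A\<in>?F. E A)"
    using noties
  proof (rule AE_mp, intro AE_I2 impI)
    fix \<omega> assume \<omega>: "\<omega> \<in> space M" and "\<forall>i\<in>S. \<forall>j\<in>S. i \<noteq> j \<longrightarrow> T i \<omega> \<noteq> T j \<omega>"
    then have "inj_on (\<lambda>i. T i \<omega>) S" by (meson inj_onI)
    then obtain A where "A \<in> ?F" "\<forall>i \<in> S - A. \<forall>j \<in> A. T i \<omega> < T j \<omega>"
      using ex_subset_card_above_complement[OF assms(2) _ assms(3)] by blast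
    with \<omega> show "\<omega> \<in> (\<Union>A\<in>?F. E A)" unfolding E_def by blast
  qed
  then have "measure M (\<Union>A\<in>?F. E A) = 1"
    using events fin by (subst AE_in_set_eq_1[symmetric]) auto
  then show ?thesis
    using finite_measure_finite_Union[OF fin events disj] unfolding qrel_def E_def by simp
qed

definition block_profile :: "nat \<Rightarrow> (nat \<Rightarrow> nat set) \<Rightarrow> nat set \<Rightarrow> nat \<Rightarrow> nat" where
  "block_profile r Cb A = (\<lambda>j. if j \<in> {1..r} then card (A \<inter> Cb j) else 0)"

lemma Union_blocks_Int_block:
  assumes "disjoint_family_on Cb I" "\<And>j. j \<in> I \<Longrightarrow> f j \<subseteq> Cb j" "l \<in> I"
  shows "(\<Union>j\<in>I. f j) \<inter> Cb l = f l"
proof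
  show "f l \<subseteq> (\<Union>j\<in>I. f j) \<inter> Cb l" using assms(2,3) by blast
  show "(\<Union>j\<in>I. f j) \<inter> Cb l \<subseteq> f l"
  proof
    fix x assume "x \<in> (\<Union>j\<in>I. f j) \<inter> Cb l"
    then obtain m where m: "m \<in> I" "x \<in> f m" "x \<in> Cb l" by blast
    with assms(2) have "x \<in> Cb m \<inter> Cb l" by blast
    then have "m = l" using assms(1,3) m(1) unfolding disjoint_family_on_def by blast
    with m(2) show "x \<in> f l" by simp
  qed
qed

lemma bij_betw_Union_blocks:
  assumes "disjoint_family_on Cb I"
  shows "bij_betw (\<lambda>f. \<Union>j\<in>I. f j) (PiE I (\<lambda>j. {X. X \<subseteq> Cb j \<and> P j X}))
           {A. A \<subseteq> (\<Union>j\<in>I. Cb j) \<and> (\<forall>j\<in>I. P j (A \<inter> Cb j))}"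
proof (rule bij_betw_byWitness[where f' = "\<lambda>A. restrict (\<lambda>j. A \<inter> Cb j) I"])
  have Int_block: "(\<Union>j\<in>I. f j) \<inter> Cb l = f l"
    if "f \<in> PiE I (\<lambda>j. {X. X \<subseteq> Cb j \<and> P j X})" "l \<in> I" for f l
    using Union_blocks_Int_block[OF assms _ that(2), of f] that(1) by (simp add: PiE_iff)
  show "\<forall>f \<in> PiE I (\<lambda>j. {X. X \<subseteq> Cb j \<and> P j X}). restrict (\<lambda>j. (\<Union>j\<in>I. f j) \<inter> Cb j) I = f"
  proof
    fix f assume f: "f \<in> PiE I (\<lambda>j. {X. X \<subseteq> Cb j \<and> P j X})"
    show "restrict (\<lambda>j. (\<Union>j\<in>I. f j) \<inter> Cb j) I = f"
      using Int_block[OF f] f by (intro ext) (simp add: PiE_iff extensional_def)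
  qed
  show "(\<lambda>f. \<Union>j\<in>I. f j) ` PiE I (\<lambda>j. {X. X \<subseteq> Cb j \<and> P j X})
          \<subseteq> {A. A \<subseteq> (\<Union>j\<in>I. Cb j) \<and> (\<forall>j\<in>I. P j (A \<inter> Cb j))}"
    using Int_block by (fastforce simp: PiE_iff)
qed auto

lemma card_eq_sum_card_Int_blocks:
  assumes "disjoint_family_on Cb I" "finite I" "\<And>j. j \<in> I \<Longrightarrow> finite (Cb j)"
    and "A \<subseteq> (\<Union>j\<in>I. Cb j)"
  shows "card A = (\<Sum>j\<in>I. card (A \<inter> Cb j))"
proof -
  have "A = (\<Union>j\<in>I. A \<inter> Cb j)" using assms(4) by blast
  also have "card \<dots> = (\<Sum>j\<in>I. card (A \<inter> Cb j))"
    using assms(1-3) by (intro card_UN_disjoint) (auto simp: disjoint_family_on_def)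
  finally show ?thesis .
qed

lemma finite_Tset: "finite (Tset r Cb k)"
proof (rule finite_subset)
  show "Tset r Cb k \<subseteq> {a. \<forall>j. (j \<in> {1..r} \<longrightarrow> a j \<in> {..k}) \<and> (j \<notin> {1..r} \<longrightarrow> a j = 0)}"
  proof
    fix a assume a: "a \<in> Tset r Cb k"
    have "a j \<le> k" if "j \<in> {1..r}" for j
    proof -
      have "a j \<le> (\<Sum>j=1..r. a j)" using that by (intro member_le_sum) auto
      with a show ?thesis unfolding Tset_def by simp
    qed
    moreover have "a j = 0" if "j \<notin> {1..r}" for j
      using a that unfolding Tset_def by blast
    ultimately show "a \<in> {a. \<forall>j. (j \<in> {1..r} \<longrightarrow> a j \<in> {..k}) \<and> (j \<notin> {1..r} \<longrightarrow> a j = 0)}"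
      by blast
  qed
  show "finite {a. \<forall>j::nat. (j \<in> {1..r} \<longrightarrow> a j \<in> {..k}) \<and> (j \<notin> {1..r} \<longrightarrow> a j = (0::nat))}"
    by (rule finite_set_of_finite_funs) simp_all
qed

lemma block_profile_in_Tset:
  assumes "disjoint_family_on Cb {1..r}" "\<And>j. j \<in> {1..r} \<Longrightarrow> finite (Cb j)"
    and "A \<subseteq> (\<Union>j\<in>{1..r}. Cb j)" "card A = k"
  shows "block_profile r Cb A \<in> Tset r Cb k"
proof -
  have "(\<Sum>j=1..r. block_profile r Cb A j) = card A"
    using card_eq_sum_card_Int_blocks[OF assms(1) _ assms(2,3)] by (simp add: block_profile_def)
  moreover have "card (A \<inter> Cb j) \<le> card (Cb j)" if "j \<in> {1..r}" for j
    using assms(2)[OF that] by (simp add: card_mono)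
  ultimately show ?thesis
    using assms(4) unfolding Tset_def block_profile_def by auto
qed

lemma sum_subsets_card_by_block_profile:
  assumes disj: "disjoint_family_on Cb {1..r}" and fin: "\<And>j. j \<in> {1..r} \<Longrightarrow> finite (Cb j)"
  shows "(\<Sum>A \<in> {A. A \<subseteq> (\<Union>j\<in>{1..r}. Cb j) \<and> card A = k}. g A)
       = (\<Sum>a \<in> Tset r Cb k. \<Sum>f \<in> PiE {1..r} (\<lambda>j. {X. X \<subseteq> Cb j \<and> card X = a j}).
            g (\<Union>j\<in>{1..r}. f j))"
proof -
  let ?U = "\<Union>j\<in>{1..r}. Cb j"
  let ?Sk = "{A. A \<subseteq> ?U \<and> card A = k}"
  have fiber: "{A \<in> ?Sk. block_profile r Cb A = a}
      = {A. A \<subseteq> ?U \<and> (\<forall>j\<in>{1..r}. card (A \<inter> Cb j) = a j)}" if a: "a \<in> Tset r Cb k" for a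
  proof
    show "{A \<in> ?Sk. block_profile r Cb A = a} \<subseteq> {A. A \<subseteq> ?U \<and> (\<forall>j\<in>{1..r}. card (A \<inter> Cb j) = a j)}"
      unfolding block_profile_def by (auto dest: fun_cong)
    show "{A. A \<subseteq> ?U \<and> (\<forall>j\<in>{1..r}. card (A \<inter> Cb j) = a j)} \<subseteq> {A \<in> ?Sk. block_profile r Cb A = a}"
    proof
      fix A assume A: "A \<in> {A. A \<subseteq> ?U \<and> (\<forall>j\<in>{1..r}. card (A \<inter> Cb j) = a j)}"
      then have "card A = (\<Sum>j=1..r. a j)"
        using card_eq_sum_card_Int_blocks[OF disj _ fin] by simp
      moreover have "block_profile r Cb A = a"
        using A a unfolding block_profile_def Tset_def by (intro ext) simp
      ultimately show "A \<in> {A \<in> ?Sk. block_profile r Cb A = a}"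
        using A a unfolding Tset_def by simp
    qed
  qed
  have "(\<Sum>A\<in>?Sk. g A) = (\<Sum>a \<in> Tset r Cb k. \<Sum>A \<in> {A \<in> ?Sk. block_profile r Cb A = a}. g A)"
    using fin block_profile_in_Tset[OF disj fin]
    by (intro sum.group[symmetric] finite_Tset) auto
  also have "\<dots> = (\<Sum>a \<in> Tset r Cb k. \<Sum>f \<in> PiE {1..r} (\<lambda>j. {X. X \<subseteq> Cb j \<and> card X = a j}).
                      g (\<Union>j\<in>{1..r}. f j))"
  proof (rule sum.cong[OF refl])
    fix a assume "a \<in> Tset r Cb k"
    show "(\<Sum>A \<in> {A \<in> ?Sk. block_profile r Cb A = a}. g A)
        = (\<Sum>f \<in> PiE {1..r} (\<lambda>j. {X. X \<subseteq> Cb j \<and> card X = a j}). g (\<Union>j\<in>{1..r}. f j))"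
      unfolding fiber[OF \<open>a \<in> Tset r Cb k\<close>]
      by (rule sum.reindex_bij_betw[OF bij_betw_Union_blocks[OF disj, where P = "\<lambda>j X. card X = a j"], symmetric])
  qed
  finally show ?thesis .
qed

lemma prod_sum_indicator_PiE:
  fixes w :: "'i \<Rightarrow> 'a \<Rightarrow> 'b::comm_semiring_1"
  assumes "finite R" "B \<subseteq> R" "\<And>j. j \<in> R \<Longrightarrow> finite (F j)"
  shows "(\<Prod>j\<in>B. \<Sum>X\<in>F j. w j X * of_bool (p j X)) * (\<Prod>j\<in>R - B. \<Sum>X\<in>F j. w j X * of_bool (\<not> p j X))
       = (\<Sum>f \<in> PiE R F. \<Prod>j\<in>R. w j (f j) * of_bool (p j (f j) \<longleftrightarrow> j \<in> B))"
proof -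
  let ?c = "\<lambda>j X. w j X * of_bool (p j X \<longleftrightarrow> j \<in> B)"
  have "(\<Prod>j\<in>B. \<Sum>X\<in>F j. w j X * of_bool (p j X)) * (\<Prod>j\<in>R - B. \<Sum>X\<in>F j. w j X * of_bool (\<not> p j X))
      = (\<Prod>j\<in>B. \<Sum>X\<in>F j. ?c j X) * (\<Prod>j\<in>R - B. \<Sum>X\<in>F j. ?c j X)"
    by (intro arg_cong2[where f = times] prod.cong sum.cong) auto
  also have "\<dots> = (\<Prod>j\<in>R. \<Sum>X\<in>F j. ?c j X)"
    using prod.subset_diff[OF assms(2,1), of "\<lambda>j. \<Sum>X\<in>F j. ?c j X"] by (simp add: mult.commute)
  also have "\<dots> = (\<Sum>f \<in> PiE R F. \<Prod>j\<in>R. ?c j (f j))"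
    using assms(1,3) by (rule prod_sum_PiE)
  finally show ?thesis .
qed

lemma mlext_sum_PiE:
  fixes F :: "nat \<Rightarrow> 'a set" and w :: "nat \<Rightarrow> 'a \<Rightarrow> real" and p :: "nat \<Rightarrow> 'a \<Rightarrow> bool"
  assumes fin: "\<And>j. j \<in> {1..r} \<Longrightarrow> finite (F j)"
    and total: "\<And>j. j \<in> {1..r} \<Longrightarrow> (\<Sum>X\<in>F j. w j X) = 1"
  shows "mlext r psi (\<lambda>j. \<Sum>X\<in>F j. w j X * of_bool (p j X))
       = (\<Sum>f \<in> PiE {1..r} F. (\<Prod>j\<in>{1..r}. w j (f j)) * of_bool (psi {j \<in> {1..r}. p j (f j)}))"
proof -
  let ?R = "{1..r}" and ?z = "\<lambda>j. \<Sum>X\<in>F j. w j X * of_bool (p j X)"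
  define c where "c B j X = w j X * of_bool (p j X \<longleftrightarrow> j \<in> B)" for B j X
  have complement: "1 - ?z j = (\<Sum>X\<in>F j. w j X * of_bool (\<not> p j X))" if "j \<in> ?R" for j
    unfolding total[OF that, symmetric] sum_subtractf[symmetric] by (intro sum.cong) auto
  have expand: "(\<Prod>j\<in>B. ?z j) * (\<Prod>j\<in>?R - B. 1 - ?z j) = (\<Sum>f \<in> PiE ?R F. \<Prod>j\<in>?R. c B j (f j))"
    if "B \<subseteq> ?R" for B
  proof -
    have "(\<Prod>j\<in>?R - B. 1 - ?z j) = (\<Prod>j\<in>?R - B. \<Sum>X\<in>F j. w j X * of_bool (\<not> p j X))"
      using complement by (intro prod.cong) auto
    then show ?thesis
      using prod_sum_indicator_PiE[OF finite_atLeastAtMost that fin, where w = w and p = p] unfolding c_def by simp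
  qed
  have select: "of_bool (psi B) * (\<Prod>j\<in>?R. c B j (f j))
      = (if B = {j \<in> ?R. p j (f j)} then of_bool (psi B) * (\<Prod>j\<in>?R. w j (f j)) else 0)"
    if "B \<subseteq> ?R" for B f
  proof (cases "B = {j \<in> ?R. p j (f j)}")
    case False
    with that obtain j where "j \<in> ?R" "p j (f j) \<noteq> (j \<in> B)" by blast
    then have "(\<Prod>j\<in>?R. c B j (f j)) = 0" unfolding c_def by (intro prod_zero) auto
    with False show ?thesis by simp
  qed (auto simp: c_def intro: prod.cong)
  have "mlext r psi ?z = (\<Sum>B \<in> Pow ?R. of_bool (psi B) * (\<Sum>f \<in> PiE ?R F. \<Prod>j\<in>?R. c B j (f j)))"
    unfolding mlext_def
  proof (intro sum.cong refl)
    fix B assume "B \<in> Pow ?R"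
    show "of_bool (psi B) * (\<Prod>j\<in>B. ?z j) * (\<Prod>j\<in>?R - B. 1 - ?z j)
        = of_bool (psi B) * (\<Sum>f \<in> PiE ?R F. \<Prod>j\<in>?R. c B j (f j))"
      using \<open>B \<in> Pow ?R\<close> by (simp only: mult.assoc expand PowD)
  qed
  also have "\<dots> = (\<Sum>f \<in> PiE ?R F. \<Sum>B \<in> Pow ?R. of_bool (psi B) * (\<Prod>j\<in>?R. c B j (f j)))"
    unfolding sum_distrib_left by (rule sum.swap)
  also have "\<dots> = (\<Sum>f \<in> PiE ?R F. (\<Prod>j\<in>?R. w j (f j)) * of_bool (psi {j \<in> ?R. p j (f j)}))"
  proof (rule sum.cong[OF refl])
    fix f
    let ?Bf = "{j \<in> ?R. p j (f j)}"
    have "(\<Sum>B \<in> Pow ?R. of_bool (psi B) * (\<Prod>j\<in>?R. c B j (f j)))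
        = (\<Sum>B \<in> Pow ?R. if B = ?Bf then of_bool (psi B) * (\<Prod>j\<in>?R. w j (f j)) else 0)"
      using select by (intro sum.cong refl) auto
    also have "\<dots> = of_bool (psi ?Bf) * (\<Prod>j\<in>?R. w j (f j))"
      by (subst sum.delta) auto
    finally show "(\<Sum>B \<in> Pow ?R. of_bool (psi B) * (\<Prod>j\<in>?R. c B j (f j)))
        = (\<Prod>j\<in>?R. w j (f j)) * of_bool (psi ?Bf)"
      by (simp only: mult.commute)
  qed
  finally show ?thesis .
qed

lemma mlext_cong:
  assumes "\<And>j. j \<in> {1..r} \<Longrightarrow> z j = z' j"
  shows "mlext r psi z = mlext r psi z'"
  unfolding mlext_def using assms by (intro sum.cong prod.cong refl arg_cong2[where f = times]) auto

lemma tps_eq_sum_subsets_card: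
  assumes "m \<le> card S"
  shows "tps M T S f (card S - m) = (\<Sum>A \<in> {A. A \<subseteq> S \<and> card A = m}. qrel M T S A * of_bool (f A))"
  unfolding tps_def using assms by simp

locale modular_system =
  fixes M :: "'m measure" and T :: "nat \<Rightarrow> 'm \<Rightarrow> real" and n r :: nat
    and Cb :: "nat \<Rightarrow> nat set" and ct :: "(nat \<Rightarrow> nat) \<Rightarrow> real"
    and phi psi :: "nat set \<Rightarrow> bool" and chi :: "nat \<Rightarrow> nat set \<Rightarrow> bool"
  assumes prob: "prob_space M"
    and meas: "\<And>i. i \<in> {1..n} \<Longrightarrow> T i \<in> borel_measurable M"
    and noties: "AE \<omega> in M. \<forall>i\<in>{1..n}. \<forall>j\<in>{1..n}. i \<noteq> j \<longrightarrow> T i \<omega> \<noteq> T j \<omega>"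
    and part_disj: "\<And>i j. i \<in> {1..r} \<Longrightarrow> j \<in> {1..r} \<Longrightarrow> i \<noteq> j \<Longrightarrow> Cb i \<inter> Cb j = {}"
    and part_un: "(\<Union>j\<in>{1..r}. Cb j) = {1..n}"
    and decomp: "\<And>A. A \<subseteq> {1..n} \<Longrightarrow>
        qrel M T {1..n} A = ct (\<lambda>j. if j \<in> {1..r} then card (A \<inter> Cb j) else 0)
                            * (\<Prod>j\<in>{1..r}. qrel M T (Cb j) (A \<inter> Cb j))"
    and modular: "\<And>A. A \<subseteq> {1..n} \<Longrightarrow> phi A = psi {j \<in> {1..r}. chi j (A \<inter> Cb j)}"
begin

lemma disjoint_blocks: "disjoint_family_on Cb {1..r}"
  using part_disj unfolding disjoint_family_on_def by blast

lemma block_subset: "j \<in> {1..r} \<Longrightarrow> Cb j \<subseteq> {1..n}"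
  using part_un by blast

lemma finite_block: "j \<in> {1..r} \<Longrightarrow> finite (Cb j)"
  using block_subset finite_subset by blast

lemma sum_qrel_block_subsets:
  assumes "j \<in> {1..r}" "m \<le> card (Cb j)"
  shows "(\<Sum>X \<in> {X. X \<subseteq> Cb j \<and> card X = m}. qrel M T (Cb j) X) = 1"
proof (rule sum_qrel_subsets_card[OF prob finite_block[OF assms(1)] assms(2)])
  show "T i \<in> borel_measurable M" if "i \<in> Cb j" for i
    using that block_subset[OF assms(1)] by (intro meas) blast
  show "AE \<omega> in M. \<forall>i\<in>Cb j. \<forall>l\<in>Cb j. i \<noteq> l \<longrightarrow> T i \<omega> \<noteq> T l \<omega>"
    using noties by eventually_elim (use block_subset[OF assms(1)] in blast)
qed

lemma qrel_phi_Union_blocks: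
  assumes "a \<in> Tset r Cb k" "f \<in> PiE {1..r} (\<lambda>j. {X. X \<subseteq> Cb j \<and> card X = a j})"
  shows "qrel M T {1..n} (\<Union>j\<in>{1..r}. f j) * of_bool (phi (\<Union>j\<in>{1..r}. f j))
       = ct a * ((\<Prod>j\<in>{1..r}. qrel M T (Cb j) (f j)) * of_bool (psi {j \<in> {1..r}. chi j (f j)}))"
proof -
  let ?A = "\<Union>j\<in>{1..r}. f j"
  have blocks: "f j \<subseteq> Cb j" and cards: "card (f j) = a j" if "j \<in> {1..r}" for j
    using assms(2) that by auto
  have Int_block: "?A \<inter> Cb j = f j" if "j \<in> {1..r}" for j
    by (rule Union_blocks_Int_block[OF disjoint_blocks blocks that])
  have sub: "?A \<subseteq> {1..n}" using blocks part_un by blast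
  have "(\<lambda>j. if j \<in> {1..r} then card (?A \<inter> Cb j) else 0) = a"
    using assms(1) Int_block cards unfolding Tset_def by (intro ext) auto
  moreover have "(\<Prod>j\<in>{1..r}. qrel M T (Cb j) (?A \<inter> Cb j)) = (\<Prod>j\<in>{1..r}. qrel M T (Cb j) (f j))"
    using Int_block by (intro prod.cong) auto
  ultimately have "qrel M T {1..n} ?A = ct a * (\<Prod>j\<in>{1..r}. qrel M T (Cb j) (f j))"
    using decomp[OF sub] by simp
  moreover have "phi ?A = psi {j \<in> {1..r}. chi j (f j)}"
    using modular[OF sub] Int_block by (metis (no_types, lifting) Collect_cong)
  ultimately show ?thesis by (simp only: mult.assoc)
qed

lemma tps_modular_decomposition:
  assumes "k \<le> n"
  shows "tps M T {1..n} phi (n - k)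
       = (\<Sum>a \<in> Tset r Cb k. ct a *
            mlext r psi (\<lambda>j. tps M T (Cb j) (chi j) (card (Cb j) - a j)))"
proof -
  let ?F = "\<lambda>a j. {X. X \<subseteq> Cb j \<and> card X = a j}"
  have "tps M T {1..n} phi (n - k)
      = (\<Sum>A \<in> {A. A \<subseteq> (\<Union>j\<in>{1..r}. Cb j) \<and> card A = k}. qrel M T {1..n} A * of_bool (phi A))"
    unfolding part_un using tps_eq_sum_subsets_card[of k "{1..n}" M T phi] assms by simp
  also have "\<dots> = (\<Sum>a \<in> Tset r Cb k. \<Sum>f \<in> PiE {1..r} (?F a).
                      qrel M T {1..n} (\<Union>j\<in>{1..r}. f j) * of_bool (phi (\<Union>j\<in>{1..r}. f j)))"
    by (rule sum_subsets_card_by_block_profile[OF disjoint_blocks finite_block])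
  also have "\<dots> = (\<Sum>a \<in> Tset r Cb k. ct a *
                      mlext r psi (\<lambda>j. tps M T (Cb j) (chi j) (card (Cb j) - a j)))"
  proof (rule sum.cong[OF refl])
    fix a assume a: "a \<in> Tset r Cb k"
    then have le: "a j \<le> card (Cb j)" if "j \<in> {1..r}" for j
      using that unfolding Tset_def by blast
    have "mlext r psi (\<lambda>j. tps M T (Cb j) (chi j) (card (Cb j) - a j))
        = mlext r psi (\<lambda>j. \<Sum>X \<in> ?F a j. qrel M T (Cb j) X * of_bool (chi j X))"
      using tps_eq_sum_subsets_card le by (intro mlext_cong) blast
    also have "\<dots> = (\<Sum>f \<in> PiE {1..r} (?F a).
        (\<Prod>j\<in>{1..r}. qrel M T (Cb j) (f j)) * of_bool (psi {j \<in> {1..r}. chi j (f j)}))"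
      using finite_block sum_qrel_block_subsets le by (intro mlext_sum_PiE) auto
    finally show "(\<Sum>f \<in> PiE {1..r} (?F a).
          qrel M T {1..n} (\<Union>j\<in>{1..r}. f j) * of_bool (phi (\<Union>j\<in>{1..r}. f j)))
        = ct a * mlext r psi (\<lambda>j. tps M T (Cb j) (chi j) (card (Cb j) - a j))"
      using qrel_phi_Union_blocks[OF a] by (simp add: sum_distrib_left)
  qed
  finally show ?thesis .
qed

end

theorem theorem12:
  fixes M :: "'m measure" and T :: "nat \<Rightarrow> 'm \<Rightarrow> real" and n r :: nat
    and Cb :: "nat \<Rightarrow> nat set" and ct :: "(nat \<Rightarrow> nat) \<Rightarrow> real"
    and phi psi :: "nat set \<Rightarrow> bool" and chi :: "nat \<Rightarrow> nat set \<Rightarrow> bool" and k :: nat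
  assumes "prob_space M"
    and meas: "\<And>i. i \<in> {1..n} \<Longrightarrow> T i \<in> borel_measurable M"
    and noties: "AE \<omega> in M. \<forall>i\<in>{1..n}. \<forall>j\<in>{1..n}. i \<noteq> j \<longrightarrow> T i \<omega> \<noteq> T j \<omega>"
    and part_ne: "\<And>j. j \<in> {1..r} \<Longrightarrow> Cb j \<noteq> {}"
    and part_disj: "\<And>i j. i \<in> {1..r} \<Longrightarrow> j \<in> {1..r} \<Longrightarrow> i \<noteq> j \<Longrightarrow> Cb i \<inter> Cb j = {}"
    and part_un: "(\<Union>j\<in>{1..r}. Cb j) = {1..n}"
    and decomp: "\<And>A. A \<subseteq> {1..n} \<Longrightarrow>
        qrel M T {1..n} A = ct (\<lambda>j. if j \<in> {1..r} then card (A \<inter> Cb j) else 0)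
                            * (\<Prod>j\<in>{1..r}. qrel M T (Cb j) (A \<inter> Cb j))"
    and sc_phi: "semicoherent {1..n} phi"
    and sc_psi: "semicoherent {1..r} psi"
    and sc_chi: "\<And>j. j \<in> {1..r} \<Longrightarrow> semicoherent (Cb j) (chi j)"
    and modular: "\<And>A. A \<subseteq> {1..n} \<Longrightarrow> phi A = psi {j \<in> {1..r}. chi j (A \<inter> Cb j)}"
    and "k \<le> n"
  shows "tps M T {1..n} phi (n - k)
       = (\<Sum>a \<in> Tset r Cb k. ct a *
            mlext r psi (\<lambda>j. tps M T (Cb j) (chi j) (card (Cb j) - a j)))"
proof -
  interpret modular_system M T n r Cb ct phi psi chi
    by (rule modular_system.intro) (fact assms(1) meas noties part_disj part_un decomp modular)+
  show ?thesis by (rule tps_modular_decomposition) fact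
qed

end
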